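(* For all $i\neq j$ and $k\in\{-1,1\}$, $R_{i,j}^{(k)}(1)<1$.
   Context: Fix an integer $N\ge 3$. Let $\mathcal G_N$ be the groupoid with object set $\{1,\dots,N\}$ generated by arrows $A_{i,j}^{(k)}$, $i\neq j\in\{1,\dots,N\}$, $k\in\{-1,1\}$, with source $i$ and target $j$, subject to the relations $A_{i,j}^{(k)}A_{j,\ell}^{(k)}=A_{i,\ell}^{(k)}$ for all $i,j,\ell$, $k$, with the convention $A_{i,i}^{(k)}:=e_i$ (unit at object $i$). Let $\mathcal A$ be its arrow set. Let $\{W_n\}_{n\ge0}$ be the Markov chain on $\mathcal A$ with $P(W_{n+1}=y\mid W_n=x)=p_{i,j}^{(k)}$ if $x^{-1}y=A_{i,j}^{(k)}$ with $i\ne j$ and $0$ otherwise, where $p_{i,j}^{(k)}\in(0,1)$ and $\sum_{j\ne i}\sum_{k=\pm1}p_{i,j}^{(k)}=1$ for each $i$; $P_x,E_x$ denote law and expectation with $W_0=x$. For $x\in\mathcal A$ let $T(0,x)=\inf\{n\ge0:W_n=W_0x\}$ (possibly $\infty$), and define $R_{i,j}^{(k)}(\lambda)=E_{e_i}[\lambda^{T(0,A_{i,j}^{(k)})}]=\sum_{n\ge0}P_{e_i}(T(0,A_{i,j}^{(k)})=n)\lambda^n$. *)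

theory Defs
  imports Complex_Main
begin

text \<open>Generators A_{c,j}^{(k)} leaving the current object c are encoded as pairs (k, j).
An arrow of the groupoid with source i is represented by a word (list of generators)
forming a composable path starting at i; two words are identified modulo the
congruence generated by the defining relations A^{(k)}_{a,b} A^{(k)}_{b,l} = A^{(k)}_{a,l}
(with A^{(k)}_{a,a} = e_a).\<close>

type_synonym gen = "int \<times> nat"

fun valid_word :: "nat \<Rightarrow> nat \<Rightarrow> gen list \<Rightarrow> bool" where
  "valid_word N c [] = True"
| "valid_word N c ((k, j) # gs) =
     (k \<in> {-1, 1} \<and> j \<in> {1..N} \<and> j \<noteq> c \<and> valid_word N j gs)"

definition tgt :: "nat \<Rightarrow> gen list \<Rightarrow> nat" where
  "tgt i gs = (if gs = [] then i else snd (last gs))"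

definition red_rel :: "nat \<Rightarrow> nat \<Rightarrow> (gen list \<times> gen list) set" where
  "red_rel N i =
     {(xs @ [(k, a), (k, b)] @ ys,
       if b = tgt i xs then xs @ ys else xs @ [(k, b)] @ ys) | xs k a b ys.
        valid_word N i (xs @ [(k, a), (k, b)] @ ys)}"

definition word_eq :: "nat \<Rightarrow> nat \<Rightarrow> gen list \<Rightarrow> gen list \<Rightarrow> bool" where
  "word_eq N i u v \<longleftrightarrow> (u, v) \<in> (red_rel N i \<union> (red_rel N i)\<inverse>)\<^sup>*"

fun path_prob :: "(nat \<Rightarrow> nat \<Rightarrow> int \<Rightarrow> real) \<Rightarrow> nat \<Rightarrow> gen list \<Rightarrow> real" where
  "path_prob p c [] = 1"
| "path_prob p c ((k, j) # gs) = p c j k * path_prob p j gs"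

text \<open>The event T(0,x) = n for the walk started at e_i, with x represented by the word w:
the increment word of length n equals x and no shorter prefix does.\<close>
definition first_hit_paths :: "nat \<Rightarrow> nat \<Rightarrow> gen list \<Rightarrow> nat \<Rightarrow> gen list set" where
  "first_hit_paths N i w n =
     {gs. length gs = n \<and> valid_word N i gs \<and> word_eq N i gs w \<and>
          (\<forall>m<n. \<not> word_eq N i (take m gs) w)}"

definition hit_prob :: "(nat \<Rightarrow> nat \<Rightarrow> int \<Rightarrow> real) \<Rightarrow> nat \<Rightarrow> nat \<Rightarrow> gen list \<Rightarrow> nat \<Rightarrow> real" where
  "hit_prob p N i w n = (\<Sum>gs\<in>first_hit_paths N i w n. path_prob p i gs)"

definition R_gen :: "(nat \<Rightarrow> nat \<Rightarrow> int \<Rightarrow> real) \<Rightarrow> nat \<Rightarrow> nat \<Rightarrow> nat \<Rightarrow> int \<Rightarrow> real \<Rightarrow> real" where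
  "R_gen p N i j k lam = (\<Sum>n. hit_prob p N i [(k, j)] n * lam ^ n)"

end

theory Submission
  imports Defs "Jordan_Normal_Form.Determinant"
begin

text \<open>The walk hits x = A_{i,j}^(k) exactly when the reduced word of x^(-1) W_n becomes empty.
  A function on reduced words that is nonnegative, equal to 1 on the empty word and
  superharmonic elsewhere bounds the probability of this event, and the product of weights
  G (t, c, e) over the letters of the word is such a function as soon as G satisfies a
  one-letter supersolution inequality; so it suffices to find a supersolution G < 1.
  Linearising that inequality at G = 1, the choice G = 1 - \<epsilon> \<alpha> works for small \<epsilon> as soon as
  the linearised operator strictly enlarges a positive vector \<alpha>. This holds because the
  operator is primitive and strictly enlarges a positive left vector, the product of stationary
  measures of the steps of each type with weights satisfying polygon inequalities; both
  primitivity and the polygon inequalities need N \<ge> 3.\<close>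

section \<open>Reduced words\<close>

text \<open>A reduced word is stored as a stack, last letter first. The letter (t, c) is a generator
  of type t ending at the object c; it starts at the target of the rest of the stack, which for
  the bottom letter is the base object r.\<close>

fun stack_tgt :: "nat \<Rightarrow> gen list \<Rightarrow> nat" where
  "stack_tgt r [] = r"
| "stack_tgt r (g # _) = snd g"

fun stack_push :: "nat \<Rightarrow> gen list \<Rightarrow> gen \<Rightarrow> gen list" where
  "stack_push r [] a = [a]"
| "stack_push r ((t', c) # rest) (t, a) =
     (if t' = t then (if a = stack_tgt r rest then rest else (t, a) # rest)
      else (t, a) # (t', c) # rest)"

fun reduced :: "nat \<Rightarrow> nat \<Rightarrow> gen list \<Rightarrow> bool" where
  "reduced N r [] = True"
| "reduced N r ((t, c) # rest) =
     (t \<in> {-1, 1} \<and> c \<in> {1..N} \<and> c \<noteq> stack_tgt r rest \<and> reduced N r rest \<and>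
      (case rest of [] \<Rightarrow> True | g # _ \<Rightarrow> fst g \<noteq> t))"

lemma stack_tgt_push [simp]: "stack_tgt r (stack_push r s a) = snd a"
  by (cases "(r, s, a)" rule: stack_push.cases) auto

lemma reduced_push:
  assumes "reduced N r s" "t \<in> {-1, 1}" "a \<in> {1..N}" "a \<noteq> stack_tgt r s"
  shows "reduced N r (stack_push r s (t, a))"
  using assms by (cases "(r, s, (t, a))" rule: stack_push.cases) (auto split: list.splits)

lemma stack_push_push_same_type:
  assumes "reduced N r s" "a \<noteq> stack_tgt r s" "b \<noteq> a"
  shows "stack_push r (stack_push r s (t, a)) (t, b) =
           (if b = stack_tgt r s then s else stack_push r s (t, b))"
  using assms by (cases "(r, s, (t, a))" rule: stack_push.cases) (auto split: list.splits)

lemma stack_tgt_reduced: "r \<in> {1..N} \<Longrightarrow> reduced N r s \<Longrightarrow> stack_tgt r s \<in> {1..N}"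
  by (cases s) auto

lemma tgt_Cons: "tgt c (g # gs) = tgt (snd g) gs"
  by (cases g) (simp add: tgt_def)

lemma valid_word_append:
  "valid_word N c (xs @ ys) \<longleftrightarrow> valid_word N c xs \<and> valid_word N (tgt c xs) ys"
  by (induction xs arbitrary: c) (auto simp: tgt_Cons tgt_def)

lemma valid_word_Cons:
  "valid_word N c (a # g) \<longleftrightarrow> a \<in> {-1, 1} \<times> ({1..N} - {c}) \<and> valid_word N (snd a) g"
  by (cases a) auto

lemma stack_tgt_foldl_push:
  "stack_tgt r s = i \<Longrightarrow> stack_tgt r (foldl (stack_push r) s gs) = tgt i gs"
  by (induction gs rule: rev_induct) (auto simp: tgt_def)

lemma reduced_foldl_push:
  "reduced N r s \<Longrightarrow> stack_tgt r s = i \<Longrightarrow> valid_word N i gs \<Longrightarrow>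
   reduced N r (foldl (stack_push r) s gs)"
proof (induction gs rule: rev_induct)
  case (snoc g gs)
  obtain t a where g: "g = (t, a)" by (cases g)
  with snoc.prems have "valid_word N i gs" "t \<in> {-1, 1}" "a \<in> {1..N}" "a \<noteq> tgt i gs"
    by (auto simp: valid_word_append)
  with snoc show ?case
    by (auto simp: g stack_tgt_foldl_push intro!: reduced_push)
qed simp

lemma foldl_push_red_rel:
  assumes "reduced N r s" "stack_tgt r s = i" "(u, v) \<in> red_rel N i"
  shows "foldl (stack_push r) s u = foldl (stack_push r) s v"
proof -
  from assms(3) obtain xs k a b ys where
    u: "u = xs @ [(k, a), (k, b)] @ ys" and
    v: "v = (if b = tgt i xs then xs @ ys else xs @ [(k, b)] @ ys)" and
    valid: "valid_word N i (xs @ [(k, a), (k, b)] @ ys)"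
    unfolding red_rel_def by blast
  let ?s = "foldl (stack_push r) s xs"
  from valid have xs: "valid_word N i xs" and "a \<noteq> tgt i xs" "b \<noteq> a"
    by (auto simp: valid_word_append tgt_Cons)
  moreover have "reduced N r ?s" "stack_tgt r ?s = tgt i xs"
    using reduced_foldl_push[OF assms(1,2) xs] stack_tgt_foldl_push[OF assms(2)] by auto
  ultimately have "stack_push r (stack_push r ?s (k, a)) (k, b) =
      (if b = tgt i xs then ?s else stack_push r ?s (k, b))"
    using stack_push_push_same_type by metis
  then show ?thesis by (simp add: u v)
qed

lemma foldl_push_word_eq:
  assumes "reduced N r s" "stack_tgt r s = i" "word_eq N i u v"
  shows "foldl (stack_push r) s u = foldl (stack_push r) s v"
proof -
  have "(u, v) \<in> (red_rel N i \<union> (red_rel N i)\<inverse>)\<^sup>*"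
    using assms(3) by (simp add: word_eq_def)
  then show ?thesis
    by induction (auto dest: foldl_push_red_rel[OF assms(1,2)])
qed

fun stack_weight :: "(int \<times> nat \<times> nat \<Rightarrow> real) \<Rightarrow> nat \<Rightarrow> gen list \<Rightarrow> real" where
  "stack_weight G r [] = 1"
| "stack_weight G r ((t, c) # rest) = G (t, c, stack_tgt r rest) * stack_weight G r rest"

definition prefix_free :: "'a list set \<Rightarrow> bool" where
  "prefix_free B \<longleftrightarrow> (\<forall>g z. g \<in> B \<longrightarrow> g @ z \<in> B \<longrightarrow> z = [])"

lemma prefix_free_Cons_residual: "prefix_free B \<Longrightarrow> prefix_free {g. a # g \<in> B}"
  unfolding prefix_free_def by auto

lemma prefix_free_first_hit_paths: "prefix_free (\<Union>n<M. first_hit_paths N i w n)"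
  unfolding prefix_free_def
proof (intro allI impI)
  fix g z
  assume "g \<in> (\<Union>n<M. first_hit_paths N i w n)" "g @ z \<in> (\<Union>n<M. first_hit_paths N i w n)"
  then have "word_eq N i g w" "\<forall>m<length (g @ z). \<not> word_eq N i (take m (g @ z)) w"
    by (auto simp: first_hit_paths_def)
  then show "z = []" by (cases z) (auto dest!: spec[of _ "length g"])
qed

lemma finite_valid_words: "finite {g. valid_word N c g \<and> length g < M}"
proof -
  have "set g \<subseteq> {-1, 1} \<times> {1..N}" if "valid_word N c g" for g
    using that by (induction N c g rule: valid_word.induct) auto
  then have "{g. valid_word N c g \<and> length g < M} \<subseteq>
             {g. set g \<subseteq> {-1, 1} \<times> {1..N} \<and> length g \<le> M}"
    by fastforce
  then show ?thesis
    by (rule finite_subset) (rule finite_lists_length_le, simp)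
qed

lemma finite_first_hit_paths: "finite (first_hit_paths N i w n)"
  by (rule finite_subset[OF _ finite_valid_words[of N i "Suc n"]])
    (auto simp: first_hit_paths_def)

lemma sum_list_set_by_head:
  assumes "finite B" "[] \<notin> B" "hd ` B \<subseteq> A" "finite A"
  shows "sum f B = (\<Sum>a\<in>A. \<Sum>g\<in>{g. a # g \<in> B}. f (a # g))"
proof -
  have B: "B = (\<lambda>(a, g). a # g) ` (SIGMA a:A. {g. a # g \<in> B})"
  proof (intro equalityI subsetI)
    fix g assume "g \<in> B"
    with assms(2,3) show "g \<in> (\<lambda>(a, g). a # g) ` (SIGMA a:A. {g. a # g \<in> B})"
      by (cases g) (auto intro!: image_eqI[where x = "(hd g, tl g)"])
  qed auto
  have "finite {g. a # g \<in> B}" for a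
    using assms(1) by (rule finite_vimageI[where h = "(#) a", unfolded vimage_def]) simp
  then show ?thesis
    by (subst B, subst sum.reindex) (auto simp: inj_on_def sum.Sigma assms(4) split_def)
qed

lemma path_prob_Cons [simp]: "path_prob p c (a # g) = p c (snd a) (fst a) * path_prob p (snd a) g"
  by (cases a) simp

lemma sum_hit_prob_eq:
  "(\<Sum>n<M. hit_prob p N i w n) = sum (path_prob p i) (\<Union>n<M. first_hit_paths N i w n)"
  unfolding hit_prob_def
  by (rule sum.UNION_disjoint[symmetric])
    (simp_all add: finite_first_hit_paths, auto simp: first_hit_paths_def)

lemma sum_pm_one: "t \<in> {-1, 1::int} \<Longrightarrow> (\<Sum>k\<in>{-1, 1}. f k) = f t + f (- t)"
  by (auto simp: add.commute)

lemma sum_offdiag_swap: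
  assumes "finite S"
  shows "(\<Sum>a\<in>S. \<Sum>b\<in>S - {a}. f a b) = (\<Sum>b\<in>S. \<Sum>a\<in>S - {b}. f a b)"
proof -
  have "{b. b \<in> S \<and> b \<noteq> a} = S - {a}" "{b. b \<in> S \<and> a \<noteq> b} = S - {a}" for a
    by auto
  then show ?thesis using sum.swap_restrict[OF assms assms, of f "\<lambda>a b. b \<noteq> a"] by simp
qed

lemma sum_distinct_triples_swap:
  assumes "finite S"
  shows "(\<Sum>c\<in>S. \<Sum>e\<in>S - {c}. \<Sum>j\<in>S - {c, e}. F c e j) =
         (\<Sum>j\<in>S. \<Sum>e\<in>S - {j}. \<Sum>c\<in>S - {j, e}. F c e j)"
proof -
  have inner: "(\<Sum>c\<in>S - {e}. \<Sum>j\<in>S - {c, e}. F c e j) = (\<Sum>j\<in>S - {e}. \<Sum>c\<in>S - {j, e}. F c e j)"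
    for e
    using sum_offdiag_swap[of "S - {e}" "\<lambda>c j. F c e j"] assms
    by (simp add: Diff_insert2[symmetric] insert_commute)
  have "(\<Sum>c\<in>S. \<Sum>e\<in>S - {c}. \<Sum>j\<in>S - {c, e}. F c e j) =
        (\<Sum>e\<in>S. \<Sum>c\<in>S - {e}. \<Sum>j\<in>S - {c, e}. F c e j)"
    by (rule sum_offdiag_swap[OF assms])
  also have "\<dots> = (\<Sum>e\<in>S. \<Sum>j\<in>S - {e}. \<Sum>c\<in>S - {j, e}. F c e j)"
    by (simp only: inner)
  also have "\<dots> = (\<Sum>j\<in>S. \<Sum>e\<in>S - {j}. \<Sum>c\<in>S - {j, e}. F c e j)"
    by (rule sum_offdiag_swap[OF assms])
  finally show ?thesis .
qed

lemma card_ge_3_ex_other: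
  assumes "finite S" "3 \<le> card S"
  shows "\<exists>x\<in>S. x \<noteq> a \<and> x \<noteq> b"
proof (rule ccontr)
  assume "\<not> ?thesis"
  then have "S \<subseteq> {a, b}" by auto
  then have "card S \<le> card {a, b}" by (rule card_mono[rotated]) simp
  also have "\<dots> \<le> 2" by (simp add: card_insert_if)
  finally show False using assms(2) by simp
qed

lemma exists_min_on:
  fixes r :: "'a \<Rightarrow> real"
  assumes "finite S" "S \<noteq> {}"
  obtains a where "a \<in> S" "\<And>y. y \<in> S \<Longrightarrow> r a \<le> r y"
  using arg_min_if_finite[OF assms, of r] by (metis not_less)

lemma less_sum_others:
  fixes g :: "'a \<Rightarrow> real"
  assumes S: "finite S" "3 \<le> card S" and g: "\<And>x. x \<in> S \<Longrightarrow> 0 < g x"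
    and e: "e \<in> S" and x: "x \<in> S" "x \<noteq> e" "g e \<le> g x"
  shows "g e < (\<Sum>y\<in>S - {e}. g y)"
proof -
  obtain z where z: "z \<in> S" "z \<noteq> e" "z \<noteq> x" using card_ge_3_ex_other[OF S] by blast
  have "g e < g x + g z" using g[OF z(1)] x(3) by simp
  also have "\<dots> = (\<Sum>y\<in>{x, z}. g y)" using z(3) by simp
  also have "\<dots> \<le> (\<Sum>y\<in>S - {e}. g y)"
    using S x z g by (intro sum_mono2) (auto intro: less_imp_le)
  finally show ?thesis .
qed

text \<open>With m the second smallest value of r, the weights f = min r m take their maximum m
  at all points but one, and f / r = min 1 (m / r) takes its maximum 1 at two points; so in
  both families every weight is smaller than the sum of the others.\<close>
lemma exists_polygon_weights:
  fixes r :: "'a \<Rightarrow> real"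
  assumes S: "finite S" "3 \<le> card S" and r: "\<And>x. x \<in> S \<Longrightarrow> 0 < r x"
  shows "\<exists>f. (\<forall>x\<in>S. 0 < f x) \<and> (\<forall>e\<in>S. f e < (\<Sum>x\<in>S - {e}. f x))
             \<and> (\<forall>e\<in>S. f e / r e < (\<Sum>x\<in>S - {e}. f x / r x))"
proof -
  have "S \<noteq> {}" using S by auto
  then obtain a where a: "a \<in> S" "\<And>y. y \<in> S \<Longrightarrow> r a \<le> r y"
    using exists_min_on[OF S(1)] by metis
  have "S - {a} \<noteq> {}" using card_ge_3_ex_other[OF S, of a a] by auto
  then obtain c where c: "c \<in> S - {a}" "\<And>y. y \<in> S - {a} \<Longrightarrow> r c \<le> r y"
    using exists_min_on[of "S - {a}" r] S(1) by auto
  define f where "f x = min (r x) (r c)" for x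
  have f_pos: "0 < f x" if "x \<in> S" for x
    using r that c(1) by (simp add: f_def)
  have ratio_pos: "0 < f x / r x" if "x \<in> S" for x
    using f_pos r that by simp
  have "f e < (\<Sum>x\<in>S - {e}. f x)" if e: "e \<in> S" for e
  proof -
    obtain x where x: "x \<in> S" "x \<noteq> a" "x \<noteq> e" using card_ge_3_ex_other[OF S] by blast
    then have "f e \<le> f x" using c(2) by (simp add: f_def)
    then show ?thesis using less_sum_others[OF S _ e] f_pos x by blast
  qed
  moreover have "f e / r e < (\<Sum>x\<in>S - {e}. f x / r x)" if e: "e \<in> S" for e
  proof -
    obtain x where x: "x \<in> {a, c}" "x \<noteq> e" using c(1) by auto
    then have "x \<in> S" using a(1) c(1) by auto
    have "r x \<le> r c" using x a(2) c(1) by auto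
    then have "f x / r x = 1" using r[OF \<open>x \<in> S\<close>] by (simp add: f_def)
    moreover have "f e / r e \<le> 1" using r[OF e] by (simp add: f_def)
    ultimately show ?thesis
      using less_sum_others[OF S, of "\<lambda>x. f x / r x" e x] ratio_pos e \<open>x \<in> S\<close> x(2) by simp
  qed
  ultimately show ?thesis using f_pos by blast
qed

lemma sum_lessThan_shift_remove:
  fixes g :: "nat \<Rightarrow> real"
  assumes "b < N"
  shows "(\<Sum>a<N. if a = b then d else g (Suc a)) = d + (\<Sum>c\<in>{1..N} - {Suc b}. g c)"
proof -
  have "(\<Sum>a<N. if a = b then d else g (Suc a)) = (\<Sum>c\<in>{1..N}. if c = Suc b then d else g c)"
    by (simp add: sum.atLeast1_atMost_eq)
  also have "\<dots> = d + (\<Sum>c\<in>{1..N} - {Suc b}. if c = Suc b then d else g c)"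
    using assms by (subst sum.remove[of _ "Suc b"]) auto
  also have "(\<Sum>c\<in>{1..N} - {Suc b}. if c = Suc b then d else g c) = (\<Sum>c\<in>{1..N} - {Suc b}. g c)"
    by (rule sum.cong) auto
  finally show ?thesis .
qed

text \<open>The generator matrix of the rates q, indexed from 0, has zero row sums and hence a
  nonzero left null vector.\<close>
lemma exists_nonzero_stationary:
  fixes q :: "nat \<Rightarrow> nat \<Rightarrow> real"
  assumes "N \<ge> 1"
  shows "\<exists>l. (\<exists>c\<in>{1..N}. l c \<noteq> 0) \<and>
    (\<forall>j\<in>{1..N}. (\<Sum>c\<in>{1..N} - {j}. l c * q c j) = l j * (\<Sum>c\<in>{1..N} - {j}. q j c))"
proof -
  define out where "out j = (\<Sum>c\<in>{1..N} - {j}. q j c)" for j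
  define Q :: "real mat" where
    "Q = mat N N (\<lambda>(a, b). if a = b then - out (Suc a) else q (Suc a) (Suc b))"
  have Q: "Q \<in> carrier_mat N N" unfolding Q_def by simp
  have "Q *\<^sub>v vec N (\<lambda>_. 1) = 0\<^sub>v N"
  proof (rule eq_vecI)
    fix a assume "a < dim_vec (0\<^sub>v N :: real vec)"
    then have a: "a < N" by simp
    have "(Q *\<^sub>v vec N (\<lambda>_. 1)) $ a = (\<Sum>b<N. if b = a then - out (Suc a) else q (Suc a) (Suc b))"
      using a by (auto simp: Q_def scalar_prod_def lessThan_atLeast0 intro!: sum.cong)
    also have "\<dots> = 0" using sum_lessThan_shift_remove[OF a] by (simp add: out_def)
    finally show "(Q *\<^sub>v vec N (\<lambda>_. 1)) $ a = 0\<^sub>v N $ a" using a by simp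
  qed (simp add: Q_def)
  moreover have "vec N (\<lambda>_. 1) \<noteq> (0\<^sub>v N :: real vec)"
  proof
    assume "vec N (\<lambda>_. 1) = (0\<^sub>v N :: real vec)"
    then have "vec N (\<lambda>_. 1) $ 0 = (0\<^sub>v N :: real vec) $ 0" by simp
    with assms show False by simp
  qed
  ultimately have "det Q = 0"
    using det_0_iff_vec_prod_zero_field[OF Q] vec_carrier[of N "\<lambda>_. 1"] by blast
  then have "det (transpose_mat Q) = 0" by (simp add: det_transpose[OF Q])
  then obtain v where v: "v \<in> carrier_vec N" "v \<noteq> 0\<^sub>v N" "transpose_mat Q *\<^sub>v v = 0\<^sub>v N"
    using det_0_iff_vec_prod_zero_field[of "transpose_mat Q" N] Q by auto
  define l where "l c = v $ (c - 1)" for c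
  show ?thesis
  proof (intro exI[of _ l] conjI ballI)
    obtain a where "a < N" "v $ a \<noteq> 0"
    proof (rule ccontr)
      assume "\<not> thesis"
      with that have "v = 0\<^sub>v N" using v(1) by (intro eq_vecI) auto
      with v(2) show False by simp
    qed
    then show "\<exists>c\<in>{1..N}. l c \<noteq> 0" unfolding l_def by (intro bexI[of _ "Suc a"]) auto
  next
    fix j assume "j \<in> {1..N}"
    then obtain b where b: "b < N" "j = Suc b" by (cases j) auto
    have "0 = (transpose_mat Q *\<^sub>v v) $ b" using v(3) b by simp
    also have "\<dots> = (\<Sum>a<N. if a = b then - out j * l j else l (Suc a) * q (Suc a) j)"
      using b v(1) by (auto simp: Q_def l_def scalar_prod_def lessThan_atLeast0 intro!: sum.cong)
    also have "\<dots> = - out j * l j + (\<Sum>c\<in>{1..N} - {j}. l c * q c j)"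
      using sum_lessThan_shift_remove[OF b(1), of "- out j * l j" "\<lambda>c. l c * q c j"] b(2) by simp
    finally show "(\<Sum>c\<in>{1..N} - {j}. l c * q c j) = l j * (\<Sum>c\<in>{1..N} - {j}. q j c)"
      by (simp add: out_def)
  qed
qed

text \<open>Taking absolute values turns a nonzero stationary vector into a nonnegative one which is
  superstationary at every state; summing over all states forces equality, and positive
  rates then spread positivity from one state to all.\<close>
lemma exists_pos_stationary:
  fixes q :: "nat \<Rightarrow> nat \<Rightarrow> real"
  assumes "N \<ge> 1"
    and q_pos: "\<And>c j. c \<in> {1..N} \<Longrightarrow> j \<in> {1..N} \<Longrightarrow> c \<noteq> j \<Longrightarrow> 0 < q c j"
  shows "\<exists>l. (\<forall>c\<in>{1..N}. 0 < l c) \<and>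
    (\<forall>j\<in>{1..N}. (\<Sum>c\<in>{1..N} - {j}. l c * q c j) = l j * (\<Sum>c\<in>{1..N} - {j}. q j c))"
proof -
  let ?S = "{1..N}"
  define out where "out j = (\<Sum>c\<in>?S - {j}. q j c)" for j
  obtain l where l: "\<exists>c\<in>?S. l c \<noteq> 0" "\<forall>j\<in>?S. (\<Sum>c\<in>?S - {j}. l c * q c j) = l j * out j"
    using exists_nonzero_stationary[OF assms(1), of q] unfolding out_def by blast
  define \<nu> where "\<nu> c = \<bar>l c\<bar>" for c
  have q_nonneg: "0 \<le> q c j" if "c \<in> ?S" "j \<in> ?S" "c \<noteq> j" for c j
    using q_pos[OF that] by simp
  have super: "0 \<le> (\<Sum>c\<in>?S - {j}. \<nu> c * q c j) - \<nu> j * out j" if j: "j \<in> ?S" for j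
  proof -
    have "0 \<le> out j" unfolding out_def using j q_nonneg by (intro sum_nonneg) auto
    then have "\<nu> j * out j = \<bar>\<Sum>c\<in>?S - {j}. l c * q c j\<bar>"
      using l(2) j by (simp add: \<nu>_def abs_mult)
    also have "\<dots> \<le> (\<Sum>c\<in>?S - {j}. \<bar>l c * q c j\<bar>)" by (rule sum_abs)
    also have "\<dots> = (\<Sum>c\<in>?S - {j}. \<nu> c * q c j)"
      using j q_nonneg by (intro sum.cong) (auto simp: \<nu>_def abs_mult)
    finally show ?thesis by simp
  qed
  have "(\<Sum>j\<in>?S. (\<Sum>c\<in>?S - {j}. \<nu> c * q c j) - \<nu> j * out j) = 0"
    using sum_offdiag_swap[of ?S "\<lambda>c j. \<nu> c * q c j"]
    by (simp add: sum_subtractf out_def sum_distrib_left)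
  then have stat: "(\<Sum>c\<in>?S - {j}. \<nu> c * q c j) = \<nu> j * out j" if "j \<in> ?S" for j
    using sum_nonneg_eq_0_iff[of ?S "\<lambda>j. (\<Sum>c\<in>?S - {j}. \<nu> c * q c j) - \<nu> j * out j"] super that
    by simp
  obtain c0 where c0: "c0 \<in> ?S" "0 < \<nu> c0" using l(1) by (auto simp: \<nu>_def)
  have "0 < \<nu> j" if j: "j \<in> ?S" for j
  proof (cases "j = c0")
    case False
    have "0 < \<nu> c0 * q c0 j" using c0 j False q_pos by simp
    also have "\<dots> \<le> (\<Sum>c\<in>?S - {j}. \<nu> c * q c j)"
      using c0 j False q_nonneg
      by (intro member_le_sum[of c0 _ "\<lambda>c. \<nu> c * q c j"]) (auto simp: \<nu>_def)
    finally have "0 < \<nu> j * out j" using stat[OF j] by simp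
    then show ?thesis by (simp add: zero_less_mult_iff \<nu>_def)
  qed (use c0 in simp)
  with stat show ?thesis unfolding out_def by blast
qed

locale walk =
  fixes N :: nat and p :: "nat \<Rightarrow> nat \<Rightarrow> int \<Rightarrow> real"
  assumes N3: "N \<ge> 3"
    and p_pos: "\<And>i j k. i \<in> {1..N} \<Longrightarrow> j \<in> {1..N} \<Longrightarrow> i \<noteq> j \<Longrightarrow> k \<in> {-1, 1} \<Longrightarrow> 0 < p i j k"
    and p_sum: "\<And>i. i \<in> {1..N} \<Longrightarrow> (\<Sum>j\<in>{1..N} - {i}. \<Sum>k\<in>{-1, 1}. p i j k) = 1"
begin

section \<open>Hitting probabilities\<close>

abbreviation moves :: "nat \<Rightarrow> gen set" where
  "moves c \<equiv> {-1, 1} \<times> ({1..N} - {c})"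

lemma sum_moves: "(\<Sum>a\<in>moves c. f (fst a) (snd a)) = (\<Sum>j\<in>{1..N} - {c}. \<Sum>k\<in>{-1, 1}. f k j)"
proof -
  have "(\<Sum>a\<in>moves c. f (fst a) (snd a)) = (\<Sum>k\<in>{-1, 1}. \<Sum>j\<in>{1..N} - {c}. f k j)"
    by (simp only: sum.cartesian_product split_def)
  then show ?thesis by (simp only: sum.swap[of _ "{-1, 1}"])
qed

lemma p_nonneg: "c \<in> {1..N} \<Longrightarrow> j \<in> {1..N} \<Longrightarrow> j \<noteq> c \<Longrightarrow> k \<in> {-1, 1} \<Longrightarrow> 0 \<le> p c j k"
  using p_pos[of c j k] by simp

lemma p_move_nonneg: "c \<in> {1..N} \<Longrightarrow> a \<in> moves c \<Longrightarrow> 0 \<le> p c (snd a) (fst a)"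
  by (auto intro: p_nonneg)

lemma sum_moves_p: "c \<in> {1..N} \<Longrightarrow> (\<Sum>a\<in>moves c. p c (snd a) (fst a)) = 1"
  using sum_moves[of "\<lambda>k j. p c j k"] p_sum by simp

lemma path_prob_nonneg: "c \<in> {1..N} \<Longrightarrow> valid_word N c g \<Longrightarrow> 0 \<le> path_prob p c g"
  by (induction g arbitrary: c) (use p_pos in force)+

lemma sum_path_prob_first_step:
  assumes "finite B" "[] \<notin> B" "\<And>g. g \<in> B \<Longrightarrow> valid_word N c g"
  shows "sum (path_prob p c) B =
           (\<Sum>a\<in>moves c. p c (snd a) (fst a) * sum (path_prob p (snd a)) {g. a # g \<in> B})"
proof -
  have "hd g \<in> moves c" if "g \<in> B" for g
    using assms(2) assms(3)[OF that] that by (cases g) (auto simp: valid_word_Cons)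
  with assms(1,2) show ?thesis
    by (simp add: sum_list_set_by_head[of B "moves c"] image_subset_iff sum_distrib_left split_def)
qed

lemma sum_path_prob_prefix_free_le_1:
  "c \<in> {1..N} \<Longrightarrow> prefix_free B \<Longrightarrow> (\<And>g. g \<in> B \<Longrightarrow> valid_word N c g \<and> length g < M) \<Longrightarrow>
   sum (path_prob p c) B \<le> 1"
proof (induction M arbitrary: c B)
  case 0
  then have "B = {}" by blast
  then show ?case by simp
next
  case (Suc M)
  have "finite B"
    by (rule finite_subset[OF _ finite_valid_words[of N c "Suc M"]]) (use Suc.prems in auto)
  show ?case
  proof (cases "[] \<in> B")
    case True
    with Suc.prems(2) have "B = {[]}" unfolding prefix_free_def by force
    then show ?thesis by simp
  next
    case False
    have "sum (path_prob p c) B =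
           (\<Sum>a\<in>moves c. p c (snd a) (fst a) * sum (path_prob p (snd a)) {g. a # g \<in> B})"
      using \<open>finite B\<close> False Suc.prems(3) by (intro sum_path_prob_first_step) auto
    also have "\<dots> \<le> (\<Sum>a\<in>moves c. p c (snd a) (fst a) * 1)"
    proof (intro sum_mono mult_left_mono)
      fix a assume a: "a \<in> moves c"
      show "0 \<le> p c (snd a) (fst a)" using p_move_nonneg[OF Suc.prems(1) a] .
      have "valid_word N (snd a) g \<and> length g < M" if "a # g \<in> B" for g
        using Suc.prems(3)[OF that] by (simp add: valid_word_Cons)
      then show "sum (path_prob p (snd a)) {g. a # g \<in> B} \<le> 1"
        using Suc.prems(2) a by (intro Suc.IH) (auto simp: prefix_free_Cons_residual)
    qed
    finally show ?thesis using sum_moves_p Suc.prems(1) by simp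
  qed
qed

text \<open>A superharmonic majorant of the indicator of Z bounds the probability of reaching Z; here B
  is a prefix-free set of increment paths leading the chain driven by step into Z.\<close>
lemma sum_path_prob_le_superharmonic:
  fixes step :: "'s \<Rightarrow> gen \<Rightarrow> 's" and pos :: "'s \<Rightarrow> nat" and H :: "'s \<Rightarrow> real"
  assumes pos_step: "\<And>s a. pos (step s a) = snd a"
    and step_closed: "\<And>s a. s \<in> S \<Longrightarrow> a \<in> moves (pos s) \<Longrightarrow> step s a \<in> S"
    and pos_S: "\<And>s. s \<in> S \<Longrightarrow> pos s \<in> {1..N}"
    and H_nonneg: "\<And>s. s \<in> S \<Longrightarrow> 0 \<le> H s"
    and H_target: "\<And>s. s \<in> S \<Longrightarrow> s \<in> Z \<Longrightarrow> 1 \<le> H s"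
    and H_super: "\<And>s. s \<in> S \<Longrightarrow> s \<notin> Z \<Longrightarrow>
        (\<Sum>a\<in>moves (pos s). p (pos s) (snd a) (fst a) * H (step s a)) \<le> H s"
  shows "s \<in> S \<Longrightarrow> prefix_free B \<Longrightarrow>
    (\<And>g. g \<in> B \<Longrightarrow> valid_word N (pos s) g \<and> length g < M \<and> foldl step s g \<in> Z) \<Longrightarrow>
    sum (path_prob p (pos s)) B \<le> H s"
proof (induction M arbitrary: s B)
  case 0
  then show ?case using H_nonneg by (cases "B = {}") auto
next
  case (Suc M)
  show ?case
  proof (cases "s \<in> Z")
    case True
    then show ?thesis
      using sum_path_prob_prefix_free_le_1[of "pos s" B "Suc M"] Suc.prems pos_S H_target
      by fastforce
  next
    case False
    then have "[] \<notin> B" using Suc.prems(3) by fastforce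
    have "finite B"
      by (rule finite_subset[OF _ finite_valid_words[of N "pos s" "Suc M"]])
        (use Suc.prems in auto)
    have "sum (path_prob p (pos s)) B = (\<Sum>a\<in>moves (pos s).
            p (pos s) (snd a) (fst a) * sum (path_prob p (snd a)) {g. a # g \<in> B})"
      using \<open>finite B\<close> \<open>[] \<notin> B\<close> Suc.prems(3) by (intro sum_path_prob_first_step) auto
    also have "\<dots> \<le> (\<Sum>a\<in>moves (pos s). p (pos s) (snd a) (fst a) * H (step s a))"
    proof (intro sum_mono mult_left_mono)
      fix a assume a: "a \<in> moves (pos s)"
      show "0 \<le> p (pos s) (snd a) (fst a)" using p_move_nonneg[OF pos_S[OF Suc.prems(1)] a] .
      have "valid_word N (snd a) g \<and> length g < M \<and> foldl step (step s a) g \<in> Z"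
        if "a # g \<in> B" for g
        using Suc.prems(3)[OF that] by (simp add: valid_word_Cons)
      then show "sum (path_prob p (snd a)) {g. a # g \<in> B} \<le> H (step s a)"
        using Suc.IH[of "step s a" "{g. a # g \<in> B}"] Suc.prems(1,2) a
        by (simp add: pos_step step_closed prefix_free_Cons_residual)
    qed
    also have "\<dots> \<le> H s" using H_super Suc.prems(1) False .
    finally show ?thesis .
  qed
qed

lemma hit_prob_nonneg: "i \<in> {1..N} \<Longrightarrow> 0 \<le> hit_prob p N i w n"
  unfolding hit_prob_def first_hit_paths_def by (auto intro!: sum_nonneg path_prob_nonneg)

lemma R_gen_1_le_of_partial_sums:
  assumes "i \<in> {1..N}" and "\<And>M. (\<Sum>n<M. hit_prob p N i [(k, j)] n) \<le> b"
  shows "R_gen p N i j k 1 \<le> b"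
proof -
  have "summable (\<lambda>n. hit_prob p N i [(k, j)] n)"
    using assms by (intro summableI_nonneg_bounded) (auto intro: hit_prob_nonneg)
  then show ?thesis
    unfolding R_gen_def using assms(2) by (simp add: suminf_le_const)
qed

text \<open>For the target x = A_{i,j}^(k) the walk is followed through x^(-1) W_n, kept as a
  reduced stack based at j: it starts as [(k, i)], and W_n = x exactly when the stack is empty.\<close>
lemma sum_hit_prob_le_stack_superharmonic:
  fixes H :: "gen list \<Rightarrow> real"
  assumes H_nonneg: "\<And>s. reduced N j s \<Longrightarrow> 0 \<le> H s" and H_empty: "H [] = 1"
    and H_super: "\<And>s. reduced N j s \<Longrightarrow> s \<noteq> [] \<Longrightarrow>
       (\<Sum>a\<in>moves (stack_tgt j s). p (stack_tgt j s) (snd a) (fst a) * H (stack_push j s a)) \<le> H s"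
    and i: "i \<in> {1..N}" and j: "j \<in> {1..N}" and ij: "i \<noteq> j" and k: "k \<in> {-1, 1}"
  shows "(\<Sum>n<M. hit_prob p N i [(k, j)] n) \<le> H [(k, i)]"
proof -
  let ?B = "\<Union>n<M. first_hit_paths N i [(k, j)] n"
  have start: "reduced N j [(k, i)]" "stack_tgt j [(k, i)] = i"
    using i ij k by auto
  have "sum (path_prob p (stack_tgt j [(k, i)])) ?B \<le> H [(k, i)]"
  proof (rule sum_path_prob_le_superharmonic[where S = "{s. reduced N j s}" and Z = "{[]}"])
    show "stack_push j s a \<in> {s. reduced N j s}"
      if "s \<in> {s. reduced N j s}" "a \<in> moves (stack_tgt j s)" for s a
      using that by (cases a) (auto intro: reduced_push)
    show "stack_tgt j s \<in> {1..N}" if "s \<in> {s. reduced N j s}" for s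
      using that j by (cases s) auto
    show "valid_word N (stack_tgt j [(k, i)]) g \<and> length g < M \<and>
          foldl (stack_push j) [(k, i)] g \<in> {[]}" if "g \<in> ?B" for g
    proof -
      from that obtain n where "n < M" "length g = n" "valid_word N i g" "word_eq N i g [(k, j)]"
        by (auto simp: first_hit_paths_def)
      moreover have "foldl (stack_push j) [(k, i)] g = foldl (stack_push j) [(k, i)] [(k, j)]"
        using foldl_push_word_eq[OF start] \<open>word_eq N i g [(k, j)]\<close> .
      ultimately show ?thesis by simp
    qed
  qed (use start H_nonneg H_empty H_super prefix_free_first_hit_paths in auto)
  then show ?thesis by (simp add: sum_hit_prob_eq)
qed

section \<open>Supersolutions\<close>

text \<open>The triple (t, c, e) stands for the generator A_{e,c}^(t), that is, for a stack whose top
  letter (t, c) lies over an object e.\<close>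
definition letters :: "(int \<times> nat \<times> nat) set" where
  "letters = {-1, 1} \<times> (SIGMA c:{1..N}. {1..N} - {c})"

lemma mem_letters [simp]:
  "(t, c, e) \<in> letters \<longleftrightarrow> t \<in> {-1, 1} \<and> c \<in> {1..N} \<and> e \<in> {1..N} \<and> c \<noteq> e"
  by (auto simp: letters_def)

lemma finite_letters: "finite letters"
  by (simp add: letters_def)

lemma letters_ne: "letters \<noteq> {}"
proof -
  have "(1, 2, 1) \<in> letters" using N3 by simp
  then show ?thesis by blast
qed

text \<open>G (t, c, e) is to bound the probability that such a top letter is ever removed: the walk
  removes it at once, turns it into another letter of type t, or pushes a letter of type -t,
  which has to be removed first.\<close>
definition supersolution :: "(int \<times> nat \<times> nat \<Rightarrow> real) \<Rightarrow> bool" where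
  "supersolution G \<longleftrightarrow> (\<forall>t c e. (t, c, e) \<in> letters \<longrightarrow>
      0 \<le> G (t, c, e) \<and>
      p c e t + (\<Sum>a\<in>{1..N} - {c, e}. p c a t * G (t, a, e))
        + G (t, c, e) * (\<Sum>a\<in>{1..N} - {c}. p c a (- t) * G (- t, a, c)) \<le> G (t, c, e))"

lemma stack_weight_nonneg:
  "supersolution G \<Longrightarrow> r \<in> {1..N} \<Longrightarrow> reduced N r s \<Longrightarrow> 0 \<le> stack_weight G r s"
proof (induction G r s rule: stack_weight.induct)
  case (2 G r t c rest)
  then have "0 \<le> G (t, c, stack_tgt r rest)"
    using stack_tgt_reduced[where r = r and s = rest] by (auto simp: supersolution_def)
  with 2 show ?case by simp
qed simp

lemma stack_weight_superharmonic:
  assumes G: "supersolution G" and r: "r \<in> {1..N}" and s: "reduced N r s" "s \<noteq> []"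
  shows "(\<Sum>a\<in>moves (stack_tgt r s). p (stack_tgt r s) (snd a) (fst a) *
            stack_weight G r (stack_push r s a)) \<le> stack_weight G r s"
proof -
  obtain t c rest where s_eq: "s = (t, c) # rest" using s(2) by (metis list.exhaust surj_pair)
  define e where "e = stack_tgt r rest"
  have t: "t \<in> {-1, 1}" and ce: "c \<in> {1..N}" "c \<noteq> e" and rest: "reduced N r rest"
    using s(1) by (auto simp: s_eq e_def)
  have e: "e \<in> {1..N}" using stack_tgt_reduced[OF r rest] by (simp add: e_def)
  let ?W = "stack_weight G r rest"
  have same: "(\<Sum>b\<in>{1..N} - {c}. p c b t * stack_weight G r (stack_push r s (t, b))) =
              (p c e t + (\<Sum>a\<in>{1..N} - {c, e}. p c a t * G (t, a, e))) * ?W"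
  proof -
    have "{1..N} - {c} = insert e ({1..N} - {c, e})" using e ce by auto
    then have "(\<Sum>b\<in>{1..N} - {c}. p c b t * stack_weight G r (stack_push r s (t, b))) =
        p c e t * ?W + (\<Sum>b\<in>{1..N} - {c, e}. p c b t * stack_weight G r (stack_push r s (t, b)))"
      by (simp add: s_eq e_def[symmetric])
    also have "(\<Sum>b\<in>{1..N} - {c, e}. p c b t * stack_weight G r (stack_push r s (t, b))) =
        (\<Sum>b\<in>{1..N} - {c, e}. p c b t * G (t, b, e)) * ?W"
      unfolding sum_distrib_right by (intro sum.cong) (auto simp: s_eq e_def[symmetric])
    finally show ?thesis by (simp add: algebra_simps)
  qed
  have other: "(\<Sum>b\<in>{1..N} - {c}. p c b (- t) * stack_weight G r (stack_push r s (- t, b))) =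
               G (t, c, e) * (\<Sum>a\<in>{1..N} - {c}. p c a (- t) * G (- t, a, c)) * ?W"
  proof -
    have "t \<noteq> 0" using t by auto
    then show ?thesis
      by (simp add: s_eq e_def[symmetric] sum_distrib_left sum_distrib_right mult_ac)
  qed
  have "stack_tgt r s = c" by (simp add: s_eq)
  then have "(\<Sum>a\<in>moves (stack_tgt r s). p (stack_tgt r s) (snd a) (fst a) *
               stack_weight G r (stack_push r s a)) =
        (\<Sum>b\<in>{1..N} - {c}. \<Sum>k\<in>{-1, 1}. p c b k * stack_weight G r (stack_push r s (k, b)))"
    using sum_moves[of "\<lambda>k b. p c b k * stack_weight G r (stack_push r s (k, b))" c]
    by (simp only: prod.collapse)
  also have "\<dots> = (p c e t + (\<Sum>a\<in>{1..N} - {c, e}. p c a t * G (t, a, e))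
           + G (t, c, e) * (\<Sum>a\<in>{1..N} - {c}. p c a (- t) * G (- t, a, c))) * ?W"
    unfolding sum_pm_one[OF t] sum.distrib same other by (simp add: distrib_right)
  also have "\<dots> \<le> G (t, c, e) * ?W"
    using G t ce e by (intro mult_right_mono stack_weight_nonneg[OF G r rest])
      (auto simp: supersolution_def)
  also have "\<dots> = stack_weight G r s" by (simp add: s_eq e_def)
  finally show ?thesis .
qed

lemma R_gen_le_supersolution:
  assumes "supersolution G"
    and "i \<in> {1..N}" "j \<in> {1..N}" "i \<noteq> j" "k \<in> {-1, 1}"
  shows "R_gen p N i j k 1 \<le> G (k, i, j)"
proof -
  have "(\<Sum>n<M. hit_prob p N i [(k, j)] n) \<le> stack_weight G j [(k, i)]" for M
    using assms stack_weight_nonneg stack_weight_superharmonic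
    by (intro sum_hit_prob_le_stack_superharmonic) auto
  then show ?thesis using assms(2) by (intro R_gen_1_le_of_partial_sums) auto
qed

section \<open>The linearised operator\<close>

lemma sum_letters:
  "(\<Sum>x\<in>letters. F x) = (\<Sum>t\<in>{-1, 1}. \<Sum>c\<in>{1..N}. \<Sum>e\<in>{1..N} - {c}. F (t, c, e))"
  unfolding letters_def by (simp add: sum.cartesian_product sum.Sigma)

definition type_prob :: "int \<Rightarrow> nat \<Rightarrow> real" where
  "type_prob t c = (\<Sum>j\<in>{1..N} - {c}. p c j t)"

lemma type_prob_add: "t \<in> {-1, 1} \<Longrightarrow> c \<in> {1..N} \<Longrightarrow> type_prob t c + type_prob (- t) c = 1"
  using p_sum[of c] by (auto simp: type_prob_def sum.distrib add.commute)

lemma type_prob_nonneg: "t \<in> {-1, 1} \<Longrightarrow> c \<in> {1..N} \<Longrightarrow> 0 \<le> type_prob t c"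
  unfolding type_prob_def by (intro sum_nonneg) (auto intro: p_nonneg)

text \<open>The linearisation of the supersolution inequality at G = 1.\<close>
definition lin :: "(int \<times> nat \<times> nat \<Rightarrow> real) \<Rightarrow> int \<times> nat \<times> nat \<Rightarrow> real" where
  "lin v = (\<lambda>(t, c, e). (\<Sum>j\<in>{1..N} - {c, e}. p c j t * v (t, j, e))
     + type_prob (- t) c * v (t, c, e) + (\<Sum>j\<in>{1..N} - {c}. p c j (- t) * v (- t, j, c)))"

lemma supersolution_lhs_one_minus:
  fixes \<alpha> :: "int \<times> nat \<times> nat \<Rightarrow> real" and \<epsilon> :: real
  assumes x: "(t, c, e) \<in> letters"
  defines "D \<equiv> \<Sum>a\<in>{1..N} - {c}. p c a (- t) * \<alpha> (- t, a, c)"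
  shows "p c e t + (\<Sum>a\<in>{1..N} - {c, e}. p c a t * (1 - \<epsilon> * \<alpha> (t, a, e)))
      + (1 - \<epsilon> * \<alpha> (t, c, e)) * (\<Sum>a\<in>{1..N} - {c}. p c a (- t) * (1 - \<epsilon> * \<alpha> (- t, a, c)))
    = 1 - \<epsilon> * lin \<alpha> (t, c, e) + \<epsilon> * \<alpha> (t, c, e) * (\<epsilon> * D)"
proof -
  let ?S = "\<Sum>a\<in>{1..N} - {c, e}. p c a t * \<alpha> (t, a, e)"
  have "{1..N} - {c} = insert e ({1..N} - {c, e})" using x by auto
  then have "type_prob t c = p c e t + (\<Sum>a\<in>{1..N} - {c, e}. p c a t)"
    by (simp add: type_prob_def)
  moreover have "(\<Sum>a\<in>{1..N} - {c, e}. p c a t * (1 - \<epsilon> * \<alpha> (t, a, e))) =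
      (\<Sum>a\<in>{1..N} - {c, e}. p c a t) - \<epsilon> * ?S"
    "(\<Sum>a\<in>{1..N} - {c}. p c a (- t) * (1 - \<epsilon> * \<alpha> (- t, a, c))) = type_prob (- t) c - \<epsilon> * D"
    by (simp_all add: D_def right_diff_distrib sum_subtractf sum_distrib_left type_prob_def mult_ac)
  moreover have "lin \<alpha> (t, c, e) = ?S + type_prob (- t) c * \<alpha> (t, c, e) + D"
    by (simp add: lin_def D_def)
  moreover have "type_prob t c + type_prob (- t) c = 1" using x type_prob_add by simp
  moreover have "q + (P - \<epsilon> * S) + (1 - \<epsilon> * a) * (s' - \<epsilon> * d)
      = 1 - \<epsilon> * (S + s' * a + d) + \<epsilon> * a * (\<epsilon> * d)"
    if "s = q + P" "s + s' = 1" for q P S a s s' d :: real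
    using that by (simp add: algebra_simps)
  ultimately show ?thesis by simp
qed

definition lin_adj :: "(int \<times> nat \<times> nat \<Rightarrow> real) \<Rightarrow> int \<times> nat \<times> nat \<Rightarrow> real" where
  "lin_adj w = (\<lambda>(t, j, e). (\<Sum>c\<in>{1..N} - {j, e}. w (t, c, e) * p c j t)
     + w (t, j, e) * type_prob (- t) j + p e j t * (\<Sum>e'\<in>{1..N} - {e}. w (- t, e, e')))"

lemma sum_letters_lin_adj: "(\<Sum>x\<in>letters. w x * lin v x) = (\<Sum>x\<in>letters. lin_adj w x * v x)"
proof -
  let ?S = "{1..N}"
  have side: "(\<Sum>c\<in>?S. \<Sum>e\<in>?S - {c}. w (t, c, e) * (\<Sum>j\<in>?S - {c, e}. p c j t * v (t, j, e))) =
      (\<Sum>j\<in>?S. \<Sum>e\<in>?S - {j}. (\<Sum>c\<in>?S - {j, e}. w (t, c, e) * p c j t) * v (t, j, e))" for t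
    using sum_distinct_triples_swap[of ?S "\<lambda>c e j. w (t, c, e) * p c j t * v (t, j, e)"]
    by (simp add: sum_distrib_left sum_distrib_right mult.assoc)
  have down: "(\<Sum>c\<in>?S. \<Sum>e\<in>?S - {c}. w (t, c, e) * (\<Sum>j\<in>?S - {c}. p c j (- t) * v (- t, j, c))) =
      (\<Sum>j\<in>?S. \<Sum>e\<in>?S - {j}. p e j (- t) * (\<Sum>e'\<in>?S - {e}. w (t, e, e')) * v (- t, j, e))" for t
  proof -
    have "(\<Sum>c\<in>?S. \<Sum>e\<in>?S - {c}. w (t, c, e) * (\<Sum>j\<in>?S - {c}. p c j (- t) * v (- t, j, c))) =
        (\<Sum>c\<in>?S. \<Sum>j\<in>?S - {c}. p c j (- t) * (\<Sum>e\<in>?S - {c}. w (t, c, e)) * v (- t, j, c))"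
      by (simp add: sum_distrib_left sum_distrib_right mult_ac)
        (rule sum.cong[OF refl], rule sum.swap)
    also have "\<dots> = (\<Sum>j\<in>?S. \<Sum>c\<in>?S - {j}. p c j (- t) * (\<Sum>e\<in>?S - {c}. w (t, c, e)) * v (- t, j, c))"
      by (rule sum_offdiag_swap) simp
    finally show ?thesis .
  qed
  define self where "self t = (\<Sum>c\<in>?S. \<Sum>e\<in>?S - {c}. w (t, c, e) * (type_prob (- t) c * v (t, c, e)))"
    for t
  define up where
    "up t = (\<Sum>j\<in>?S. \<Sum>e\<in>?S - {j}. p e j t * (\<Sum>e'\<in>?S - {e}. w (- t, e, e')) * v (t, j, e))"
    for t
  have "(\<Sum>x\<in>letters. w x * lin v x) = (\<Sum>t\<in>{-1, 1}.
      (\<Sum>j\<in>?S. \<Sum>e\<in>?S - {j}. (\<Sum>c\<in>?S - {j, e}. w (t, c, e) * p c j t) * v (t, j, e))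
      + self t + up (- t))"
    unfolding sum_letters lin_def prod.case distrib_left sum.distrib side down self_def up_def
    by simp
  also have "\<dots> = (\<Sum>t\<in>{-1, 1}.
      (\<Sum>j\<in>?S. \<Sum>e\<in>?S - {j}. (\<Sum>c\<in>?S - {j, e}. w (t, c, e) * p c j t) * v (t, j, e))
      + self t + up t)"
    by (simp add: algebra_simps)
  also have "\<dots> = (\<Sum>x\<in>letters. lin_adj w x * v x)"
    unfolding sum_letters lin_adj_def prod.case distrib_right sum.distrib self_def up_def
    by (simp add: mult_ac)
  finally show ?thesis .
qed

lemma lin_nonneg:
  assumes v: "\<forall>y\<in>letters. 0 \<le> v y" and x: "x \<in> letters"
  shows "0 \<le> lin v x"
proof -
  obtain t c e where x_eq: "x = (t, c, e)" by (cases x)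
  have "-t \<in> {-1, 1}" using x x_eq by auto
  with v x show ?thesis
    unfolding x_eq lin_def
    by (auto intro!: add_nonneg_nonneg sum_nonneg mult_nonneg_nonneg type_prob_nonneg p_nonneg)
qed

lemma lin_sum: "finite A \<Longrightarrow> lin (\<lambda>x. \<Sum>m\<in>A. F m x) x = (\<Sum>m\<in>A. lin (F m) x)"
  by (cases x) (simp add: lin_def sum_distrib_left sum.distrib sum.swap[of _ A])

definition pmin :: real where
  "pmin = Min ((\<lambda>(t, j, c). p c j t) ` letters)"

lemma pmin_le:
  assumes "(t, j, c) \<in> letters"
  shows "pmin \<le> p c j t"
  unfolding pmin_def using finite_letters assms
  by (intro Min_le finite_imageI) (auto intro!: image_eqI[where x = "(t, j, c)"])

lemma pmin_pos: "0 < pmin"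
  unfolding pmin_def using finite_letters letters_ne p_pos by (auto simp: Min_gr_iff)

definition lin_edge :: "int \<times> nat \<times> nat \<Rightarrow> int \<times> nat \<times> nat \<Rightarrow> bool" where
  "lin_edge x y \<longleftrightarrow> x \<in> letters \<and> y \<in> letters \<and> (case x of (t, c, e) \<Rightarrow>
     y = x \<or> (\<exists>j. j \<noteq> c \<and> y = (t, j, e)) \<or> (\<exists>j. y = (- t, j, c)))"

lemma lin_ge_parts:
  assumes v: "\<forall>z\<in>letters. 0 \<le> v z" and x: "(t, c, e) \<in> letters"
  shows "(\<Sum>j\<in>{1..N} - {c, e}. p c j t * v (t, j, e)) \<le> lin v (t, c, e)"
    and "type_prob (- t) c * v (t, c, e) \<le> lin v (t, c, e)"
    and "(\<Sum>j\<in>{1..N} - {c}. p c j (- t) * v (- t, j, c)) \<le> lin v (t, c, e)"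
proof -
  have "- t \<in> {-1, 1}" using x by auto
  with v x have "0 \<le> (\<Sum>j\<in>{1..N} - {c, e}. p c j t * v (t, j, e))"
    "0 \<le> type_prob (- t) c * v (t, c, e)" "0 \<le> (\<Sum>j\<in>{1..N} - {c}. p c j (- t) * v (- t, j, c))"
    by (auto intro!: sum_nonneg mult_nonneg_nonneg p_nonneg type_prob_nonneg)
  then show "(\<Sum>j\<in>{1..N} - {c, e}. p c j t * v (t, j, e)) \<le> lin v (t, c, e)"
    and "type_prob (- t) c * v (t, c, e) \<le> lin v (t, c, e)"
    and "(\<Sum>j\<in>{1..N} - {c}. p c j (- t) * v (- t, j, c)) \<le> lin v (t, c, e)"
    by (simp_all add: lin_def)
qed

lemma lin_ge_lin_edge:
  assumes v: "\<forall>z\<in>letters. 0 \<le> v z" and "lin_edge x y"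
  shows "pmin * v y \<le> lin v x"
proof -
  obtain t c e where x: "x = (t, c, e)" by (cases x)
  have "- t \<in> {-1, 1}" and x_letter: "(t, c, e) \<in> letters" and y: "y \<in> letters"
    using assms(2) by (auto simp: x lin_edge_def)
  note parts = lin_ge_parts[OF v x_letter]
  have "y = x \<or> (\<exists>j. j \<noteq> c \<and> y = (t, j, e)) \<or> (\<exists>j. y = (- t, j, c))"
    using assms(2) by (simp add: lin_edge_def x)
  then consider "y = x" | j where "j \<noteq> c" "y = (t, j, e)" | j where "y = (- t, j, c)"
    by blast
  then show ?thesis
  proof cases
    case 1
    have "pmin \<le> p c e (- t)" using pmin_le \<open>- t \<in> {-1, 1}\<close> x_letter by simp
    also have "\<dots> \<le> type_prob (- t) c"
      unfolding type_prob_def using x_letter \<open>- t \<in> {-1, 1}\<close>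
      by (intro member_le_sum) (auto intro: p_nonneg)
    finally have "pmin * v (t, c, e) \<le> type_prob (- t) c * v (t, c, e)"
      using v x_letter by (intro mult_right_mono) auto
    with parts(2) 1 show ?thesis by (simp add: x)
  next
    case (2 j)
    have "pmin * v y \<le> p c j t * v (t, j, e)"
      using v y 2 x_letter pmin_le[of t j c] by (auto intro!: mult_right_mono)
    also have "\<dots> \<le> (\<Sum>j\<in>{1..N} - {c, e}. p c j t * v (t, j, e))"
      using v y 2 x_letter
      by (intro member_le_sum[of j _ "\<lambda>j. p c j t * v (t, j, e)"])
        (auto intro!: mult_nonneg_nonneg p_nonneg)
    finally show ?thesis using parts(1) by (simp add: x)
  next
    case (3 j)
    have "pmin * v y \<le> p c j (- t) * v (- t, j, c)"
      using v y 3 x_letter pmin_le[of "- t" j c] by (auto intro!: mult_right_mono)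
    also have "\<dots> \<le> (\<Sum>j\<in>{1..N} - {c}. p c j (- t) * v (- t, j, c))"
      using v y 3 x_letter \<open>- t \<in> {-1, 1}\<close>
      by (intro member_le_sum[of j _ "\<lambda>j. p c j (- t) * v (- t, j, c)"])
        (auto intro!: mult_nonneg_nonneg p_nonneg)
    finally show ?thesis using parts(3) by (simp add: x)
  qed
qed

lemma ex_third_object:
  assumes "c \<in> {1..N}" "e \<in> {1..N}"
  obtains j where "j \<in> {1..N}" "j \<noteq> c" "j \<noteq> e"
  using card_ge_3_ex_other[of "{1..N}" c e] N3 by auto

lemma lin_edge_path3:
  assumes x: "x \<in> letters" and y: "y \<in> letters"
  shows "\<exists>x1 x2. lin_edge x x1 \<and> lin_edge x1 x2 \<and> lin_edge x2 y"
proof -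
  obtain t c e where x_eq: "x = (t, c, e)" by (cases x)
  obtain t' c' e' where y_eq: "y = (t', c', e')" by (cases y)
  have t': "t' = t \<or> t' = - t" using x y by (auto simp: x_eq y_eq)
  obtain j where j: "j \<in> {1..N}" "j \<noteq> c" "j \<noteq> e"
    using x ex_third_object by (auto simp: x_eq)
  consider "t' = t" "e' \<noteq> c" | "t' = t" "e' = c" | "t' = - t" "e' \<noteq> e" | "t' = - t" "e' = e"
    using t' by blast
  then show ?thesis
  proof cases
    case 1
    then show ?thesis using x y
      by (intro exI[of _ "(- t, e', c)"] exI[of _ y]) (auto simp: lin_edge_def x_eq y_eq)
  next
    case 2
    then show ?thesis using x y j
      by (intro exI[of _ "(t, j, e)"] exI[of _ "(- t, c, j)"]) (auto simp: lin_edge_def x_eq y_eq)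
  next
    case 3
    then show ?thesis using x y
      by (intro exI[of _ "(t, e', e)"] exI[of _ y]) (auto simp: lin_edge_def x_eq y_eq)
  next
    case 4
    then show ?thesis using x y j
      by (intro exI[of _ "(- t, j, c)"] exI[of _ "(t, e, j)"]) (auto simp: lin_edge_def x_eq y_eq)
  qed
qed

lemma pmin_cube_le_lin3:
  assumes v: "\<forall>z\<in>letters. 0 \<le> v z" and "x \<in> letters" "y \<in> letters"
  shows "pmin ^ 3 * v y \<le> lin (lin (lin v)) x"
proof -
  obtain x1 x2 where edges: "lin_edge x x1" "lin_edge x1 x2" "lin_edge x2 y"
    using lin_edge_path3[OF assms(2,3)] by blast
  have v1: "\<forall>z\<in>letters. 0 \<le> lin v z" and v2: "\<forall>z\<in>letters. 0 \<le> lin (lin v) z"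
    using v by (auto intro: lin_nonneg)
  have "pmin ^ 3 * v y = pmin * (pmin * (pmin * v y))" by (simp add: power3_eq_cube)
  also have "\<dots> \<le> pmin * (pmin * lin v x2)"
    using lin_ge_lin_edge[OF v edges(3)] pmin_pos by simp
  also have "\<dots> \<le> pmin * lin (lin v) x1"
    using lin_ge_lin_edge[OF v1 edges(2)] pmin_pos by simp
  also have "\<dots> \<le> lin (lin (lin v)) x"
    using lin_ge_lin_edge[OF v2 edges(1)] .
  finally show ?thesis .
qed

section \<open>An expanding vector\<close>

lemma lin_adj_stationary_product:
  assumes stat: "(\<Sum>c\<in>{1..N} - {j}. lam t c * p c j t) = lam t j * type_prob t j"
    and x: "(t, j, e) \<in> letters"
  shows "lin_adj (\<lambda>(t, j, e). lam t j * Y (- t) e) (t, j, e) =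
    lam t j * Y (- t) e + p e j t * (lam (- t) e * (\<Sum>x\<in>{1..N} - {e}. Y t x) - lam t e * Y (- t) e)"
proof -
  have "{1..N} - {j} = insert e ({1..N} - {j, e})" using x by auto
  then have "(\<Sum>c\<in>{1..N} - {j}. lam t c * p c j t) =
        lam t e * p e j t + (\<Sum>c\<in>{1..N} - {j, e}. lam t c * p c j t)"
    by simp
  then have rest: "lam t j * type_prob t j - lam t e * p e j t =
      (\<Sum>c\<in>{1..N} - {j, e}. lam t c * p c j t)"
    using stat by simp
  have side: "(\<Sum>c\<in>{1..N} - {j, e}. lam t c * Y (- t) e * p c j t) =
      Y (- t) e * (lam t j * type_prob t j - lam t e * p e j t)"
    unfolding rest by (simp add: sum_distrib_left mult_ac)
  have "type_prob (- t) j = 1 - type_prob t j" using type_prob_add[of t j] x by simp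
  then have "lin_adj (\<lambda>(t, j, e). lam t j * Y (- t) e) (t, j, e) =
      (\<Sum>c\<in>{1..N} - {j, e}. lam t c * Y (- t) e * p c j t)
      + lam t j * Y (- t) e * (1 - type_prob t j) + p e j t * (lam (- t) e * (\<Sum>x\<in>{1..N} - {e}. Y t x))"
    by (simp add: lin_adj_def sum_distrib_left)
  then show ?thesis unfolding side by (simp add: algebra_simps)
qed

lemma exists_stationary_of_type:
  assumes "t \<in> {-1, 1}"
  shows "\<exists>l. (\<forall>c\<in>{1..N}. 0 < l c) \<and>
    (\<forall>j\<in>{1..N}. (\<Sum>c\<in>{1..N} - {j}. l c * p c j t) = l j * type_prob t j)"
  unfolding type_prob_def by (rule exists_pos_stationary) (use N3 p_pos assms in auto)

text \<open>The left vector is lam t j * Y (-t) e with lam t stationary for the steps of type t. Its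
  excess given by lin_adj_stationary_product is positive once Y satisfies polygon inequalities,
  taken from exists_polygon_weights with r the ratio of the two stationary measures.\<close>
lemma exists_lin_adj_strict: "\<exists>w. \<forall>x\<in>letters. 0 < w x \<and> w x < lin_adj w x"
proof -
  have "\<forall>t\<in>{-1, 1}. \<exists>l. (\<forall>c\<in>{1..N}. 0 < l c) \<and>
      (\<forall>j\<in>{1..N}. (\<Sum>c\<in>{1..N} - {j}. l c * p c j t) = l j * type_prob t j)"
    by (intro ballI exists_stationary_of_type)
  then obtain lam where lam: "\<forall>t\<in>{-1, 1}. (\<forall>c\<in>{1..N}. 0 < lam t c) \<and>
      (\<forall>j\<in>{1..N}. (\<Sum>c\<in>{1..N} - {j}. lam t c * p c j t) = lam t j * type_prob t j)"
    by (rule bchoice[elim_format]) blast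
  then have lam_pos: "\<And>t c. t \<in> {-1, 1} \<Longrightarrow> c \<in> {1..N} \<Longrightarrow> 0 < lam t c"
    and lam_stat: "\<And>t j. t \<in> {-1, 1} \<Longrightarrow> j \<in> {1..N} \<Longrightarrow>
        (\<Sum>c\<in>{1..N} - {j}. lam t c * p c j t) = lam t j * type_prob t j"
    by blast+
  define r where "r x = lam 1 x / lam (-1) x" for x
  have r_pos: "0 < r x" if "x \<in> {1..N}" for x
    using lam_pos[OF _ that] by (simp add: r_def)
  obtain f where f_pos: "\<forall>x\<in>{1..N}. 0 < f x"
    and f_poly: "\<forall>e\<in>{1..N}. f e < (\<Sum>x\<in>{1..N} - {e}. f x)"
    and fr_poly: "\<forall>e\<in>{1..N}. f e / r e < (\<Sum>x\<in>{1..N} - {e}. f x / r x)"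
    using exists_polygon_weights[of "{1..N}" r] N3 r_pos by auto
  define Y where "Y t x = (if t = 1 then f x else f x / r x)" for t :: int and x
  have margin: "lam t e * Y (- t) e < lam (- t) e * (\<Sum>x\<in>{1..N} - {e}. Y t x)"
    if t: "t \<in> {-1, 1}" and e: "e \<in> {1..N}" for t e
  proof -
    have l1: "0 < lam 1 e" and l2: "0 < lam (-1) e" using lam_pos e by auto
    then have "lam 1 e * (f e / r e) = lam (-1) e * f e" by (simp add: r_def)
    with t show ?thesis
      using mult_strict_left_mono[OF f_poly[rule_format, OF e] l2]
        mult_strict_left_mono[OF fr_poly[rule_format, OF e] l1]
      by (auto simp: Y_def sum_divide_distrib)
  qed
  show ?thesis
  proof (intro exI[of _ "\<lambda>(t, j, e). lam t j * Y (- t) e"] ballI)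
    fix x assume x: "x \<in> letters"
    obtain t j e where x_eq: "x = (t, j, e)" by (cases x)
    have letter: "t \<in> {-1, 1}" "j \<in> {1..N}" "e \<in> {1..N}" "j \<noteq> e"
      using x by (auto simp: x_eq)
    have "0 < Y (- t) e" using letter f_pos r_pos by (auto simp: Y_def)
    then have "0 < lam t j * Y (- t) e" using lam_pos letter by simp
    moreover have "0 < p e j t * (lam (- t) e * (\<Sum>x\<in>{1..N} - {e}. Y t x) - lam t e * Y (- t) e)"
      using p_pos[of e j t] margin[of t e] letter by simp
    ultimately show "0 < (\<lambda>(t, j, e). lam t j * Y (- t) e) x \<and>
        (\<lambda>(t, j, e). lam t j * Y (- t) e) x < lin_adj (\<lambda>(t, j, e). lam t j * Y (- t) e) x"
      using lin_adj_stationary_product[of lam t j e Y, OF lam_stat x[unfolded x_eq]] letter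
      by (simp add: x_eq)
  qed
qed

definition lin_pow :: "nat \<Rightarrow> int \<times> nat \<times> nat \<Rightarrow> real" where
  "lin_pow n = (lin ^^ n) (\<lambda>_. 1)"

lemma lin_pow_0 [simp]: "lin_pow 0 x = 1"
  by (simp add: lin_pow_def)

lemma lin_pow_Suc: "lin_pow (Suc n) = lin (lin_pow n)"
  by (simp add: lin_pow_def)

lemma lin_pow_nonneg: "x \<in> letters \<Longrightarrow> 0 \<le> lin_pow n x"
  by (induction n arbitrary: x) (auto simp: lin_pow_Suc intro: lin_nonneg)

lemma sum_lin_pow_growth:
  assumes "0 \<le> \<epsilon>" and expand: "\<And>x. x \<in> letters \<Longrightarrow> (1 + \<epsilon>) * w x \<le> lin_adj w x"
  shows "(1 + \<epsilon>) ^ n * (\<Sum>x\<in>letters. w x) \<le> (\<Sum>x\<in>letters. w x * lin_pow n x)"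
proof (induction n)
  case (Suc n)
  have "(1 + \<epsilon>) ^ Suc n * (\<Sum>x\<in>letters. w x) \<le> (1 + \<epsilon>) * (\<Sum>x\<in>letters. w x * lin_pow n x)"
    using Suc assms(1) by (simp add: mult.assoc mult_left_mono)
  also have "\<dots> \<le> (\<Sum>x\<in>letters. lin_adj w x * lin_pow n x)"
    unfolding sum_distrib_left
    by (intro sum_mono) (simp add: mult.assoc[symmetric] expand lin_pow_nonneg mult_right_mono)
  also have "\<dots> = (\<Sum>x\<in>letters. w x * lin_pow (Suc n) x)"
    by (simp add: sum_letters_lin_adj lin_pow_Suc)
  finally show ?case .
qed simp

text \<open>Primitivity turns the growth of the weighted sum into growth of every entry.\<close>
lemma lin_pow_lower_bound:
  assumes "0 \<le> \<epsilon>" and w_pos: "\<And>x. x \<in> letters \<Longrightarrow> 0 < w x"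
    and expand: "\<And>x. x \<in> letters \<Longrightarrow> (1 + \<epsilon>) * w x \<le> lin_adj w x"
    and x: "x \<in> letters"
  shows "pmin ^ 3 * (1 + \<epsilon>) ^ n \<le> lin_pow (n + 3) x"
proof -
  have "0 < (\<Sum>y\<in>letters. w y)"
    using x w_pos finite_letters by (intro sum_pos) auto
  moreover have "pmin ^ 3 * (1 + \<epsilon>) ^ n * (\<Sum>y\<in>letters. w y) \<le> lin_pow (n + 3) x * (\<Sum>y\<in>letters. w y)"
  proof -
    have "pmin ^ 3 * (1 + \<epsilon>) ^ n * (\<Sum>y\<in>letters. w y) \<le> pmin ^ 3 * (\<Sum>y\<in>letters. w y * lin_pow n y)"
      using sum_lin_pow_growth[OF assms(1) expand] pmin_pos by (simp add: mult.assoc)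
    also have "\<dots> = (\<Sum>y\<in>letters. w y * (pmin ^ 3 * lin_pow n y))"
      by (simp add: sum_distrib_left mult_ac)
    also have "\<dots> \<le> (\<Sum>y\<in>letters. w y * lin_pow (n + 3) x)"
      using pmin_cube_le_lin3[of "lin_pow n" x] lin_pow_nonneg x w_pos
      by (intro sum_mono mult_left_mono) (auto simp: lin_pow_Suc numeral_3_eq_3 less_imp_le)
    finally show ?thesis by (simp add: sum_distrib_right mult.commute)
  qed
  ultimately show ?thesis by simp
qed

lemma exists_lin_expanding: "\<exists>\<alpha>. \<forall>x\<in>letters. 1 \<le> \<alpha> x \<and> \<alpha> x + 1 \<le> lin \<alpha> x"
proof -
  obtain w where w: "\<forall>x\<in>letters. 0 < w x \<and> w x < lin_adj w x"
    using exists_lin_adj_strict by blast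
  define \<epsilon> where "\<epsilon> = Min ((\<lambda>x. lin_adj w x / w x - 1) ` letters)"
  have "0 < \<epsilon>"
    unfolding \<epsilon>_def using finite_letters letters_ne w by (auto simp: Min_gr_iff field_simps)
  have expand: "(1 + \<epsilon>) * w x \<le> lin_adj w x" if "x \<in> letters" for x
  proof -
    have "\<epsilon> \<le> lin_adj w x / w x - 1"
      unfolding \<epsilon>_def using finite_letters that by (intro Min_le) auto
    then show ?thesis using w that by (simp add: field_simps)
  qed
  obtain n where n: "2 / pmin ^ 3 < (1 + \<epsilon>) ^ n"
    using real_arch_pow[of "1 + \<epsilon>"] \<open>0 < \<epsilon>\<close> by auto
  define K where "K = n + 3"
  have big: "2 \<le> lin_pow K x" if "x \<in> letters" for x
  proof -
    have "2 \<le> pmin ^ 3 * (1 + \<epsilon>) ^ n" using n pmin_pos by (simp add: field_simps)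
    also have "\<dots> \<le> lin_pow K x"
      unfolding K_def using lin_pow_lower_bound[of \<epsilon> w x n] \<open>0 < \<epsilon>\<close> w expand that by auto
    finally show ?thesis .
  qed
  define \<alpha> where "\<alpha> x = (\<Sum>m<K. lin_pow m x)" for x
  show ?thesis
  proof (intro exI[of _ \<alpha>] ballI conjI)
    fix x assume x: "x \<in> letters"
    have "lin_pow 0 x \<le> \<alpha> x"
      unfolding \<alpha>_def K_def using x by (intro member_le_sum) (auto simp: lin_pow_nonneg)
    then show "1 \<le> \<alpha> x" by simp
    have "lin \<alpha> x = (\<Sum>m<K. lin_pow (Suc m) x)"
      unfolding \<alpha>_def by (simp add: lin_sum lin_pow_Suc)
    also have "\<dots> = \<alpha> x + lin_pow K x - lin_pow 0 x"
      using sum.lessThan_Suc_shift[of "\<lambda>m. lin_pow m x" K] sum.lessThan_Suc[of "\<lambda>m. lin_pow m x" K]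
      unfolding \<alpha>_def by simp
    finally show "\<alpha> x + 1 \<le> lin \<alpha> x" using big[OF x] by simp
  qed
qed

lemma sum_p_le_bound:
  assumes "t \<in> {-1, 1}" "c \<in> {1..N}" "0 \<le> A" "\<And>a. a \<in> {1..N} - {c} \<Longrightarrow> f a \<le> A"
  shows "(\<Sum>a\<in>{1..N} - {c}. p c a t * f a) \<le> A"
proof -
  have "(\<Sum>a\<in>{1..N} - {c}. p c a t * f a) \<le> (\<Sum>a\<in>{1..N} - {c}. p c a t * A)"
    using assms by (intro sum_mono mult_left_mono) (auto intro: p_nonneg)
  also have "\<dots> = A * type_prob t c" by (simp add: type_prob_def sum_distrib_left mult.commute)
  also have "\<dots> \<le> A"
  proof (rule mult_left_le)
    have "- t \<in> {-1, 1}" using assms(1) by auto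
    then show "type_prob t c \<le> 1"
      using type_prob_add[OF assms(1,2)] type_prob_nonneg[of "- t" c] assms(2) by simp
  qed (rule assms(3))
  finally show ?thesis .
qed

text \<open>With A bounding \<alpha>, the choice \<epsilon> = 1 / A^2 makes the quadratic error term of the
  linearisation at most \<epsilon>.\<close>
lemma exists_strict_supersolution: "\<exists>G. supersolution G \<and> (\<forall>x\<in>letters. G x < 1)"
proof -
  obtain \<alpha> where \<alpha>: "\<And>x. x \<in> letters \<Longrightarrow> 1 \<le> \<alpha> x \<and> \<alpha> x + 1 \<le> lin \<alpha> x"
    using exists_lin_expanding by blast
  define A where "A = Max (\<alpha> ` letters)"
  have \<alpha>_le: "\<alpha> x \<le> A" if "x \<in> letters" for x
    unfolding A_def using finite_letters that by simp
  obtain x where "x \<in> letters" using letters_ne by blast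
  then have A: "1 \<le> A" using \<alpha> \<alpha>_le by (meson order_trans)
  define \<epsilon> where "\<epsilon> = 1 / A\<^sup>2"
  have \<epsilon>: "0 < \<epsilon>" "\<epsilon> * (A * A) = 1" using A by (auto simp: \<epsilon>_def power2_eq_square)
  have "supersolution (\<lambda>x. 1 - \<epsilon> * \<alpha> x)"
    unfolding supersolution_def
  proof (intro allI impI conjI)
    fix t c e assume x: "(t, c, e) \<in> letters"
    let ?a = "\<alpha> (t, c, e)"
    let ?D = "\<Sum>a\<in>{1..N} - {c}. p c a (- t) * \<alpha> (- t, a, c)"
    have "\<epsilon> * ?a \<le> \<epsilon> * (A * A)"
      using \<alpha>_le[OF x] A \<epsilon>(1) by (simp add: mult_le_cancel_left1 order_trans)
    then show "0 \<le> 1 - \<epsilon> * ?a" using \<epsilon>(2) by simp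
    have t: "- t \<in> {-1, 1}" and c: "c \<in> {1..N}" using x by auto
    have "0 \<le> ?D"
      using x \<alpha>
      by (auto intro!: sum_nonneg mult_nonneg_nonneg p_nonneg intro: order.trans[OF zero_le_one])
    moreover have "?D \<le> A"
      using \<alpha>_le A c t by (intro sum_p_le_bound[OF t c]) auto
    ultimately have "\<epsilon> * (?a * ?D) \<le> \<epsilon> * (A * A)"
      using \<alpha>_le[OF x] \<alpha>[OF x] \<epsilon>(1) by (intro mult_left_mono mult_mono) auto
    then have "\<epsilon> * (\<epsilon> * (?a * ?D)) \<le> \<epsilon> * 1"
      using \<epsilon> by (intro mult_left_mono) auto
    then have "\<epsilon> * ?a * (\<epsilon> * ?D) \<le> \<epsilon>" by (simp add: mult_ac)
    moreover have "\<epsilon> * ?a + \<epsilon> \<le> \<epsilon> * lin \<alpha> (t, c, e)"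
      using \<alpha>[OF x] \<epsilon>(1) mult_left_mono[of "?a + 1" "lin \<alpha> (t, c, e)" \<epsilon>]
      by (simp add: algebra_simps)
    ultimately show "p c e t + (\<Sum>a\<in>{1..N} - {c, e}. p c a t * (1 - \<epsilon> * \<alpha> (t, a, e)))
        + (1 - \<epsilon> * ?a) * (\<Sum>a\<in>{1..N} - {c}. p c a (- t) * (1 - \<epsilon> * \<alpha> (- t, a, c)))
        \<le> 1 - \<epsilon> * ?a"
      unfolding supersolution_lhs_one_minus[OF x] by linarith
  qed
  moreover have "1 - \<epsilon> * \<alpha> x < 1" if "x \<in> letters" for x
    using \<alpha>[OF that] \<epsilon>(1) by simp
  ultimately show ?thesis by blast
qed

end

theorem corollary5p5:
  fixes N :: nat and p :: "nat \<Rightarrow> nat \<Rightarrow> int \<Rightarrow> real"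
  assumes N3: "N \<ge> 3"
    and p_pos: "\<And>i j k. i \<in> {1..N} \<Longrightarrow> j \<in> {1..N} \<Longrightarrow> i \<noteq> j \<Longrightarrow> k \<in> {-1, 1} \<Longrightarrow>
                  0 < p i j k \<and> p i j k < 1"
    and p_sum: "\<And>i. i \<in> {1..N} \<Longrightarrow> (\<Sum>j\<in>{1..N} - {i}. \<Sum>k\<in>{-1, 1}. p i j k) = 1"
    and i: "i \<in> {1..N}" and j: "j \<in> {1..N}" and ij: "i \<noteq> j" and k: "k \<in> {-1, 1::int}"
  shows "R_gen p N i j k 1 < 1"
proof -
  interpret walk N p by unfold_locales (use N3 p_pos p_sum in auto)
  obtain G where G: "supersolution G" "\<forall>x\<in>letters. G x < 1"
    using exists_strict_supersolution by blast
  have "R_gen p N i j k 1 \<le> G (k, i, j)"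
    using R_gen_le_supersolution[OF G(1) i j ij k] .
  also have "\<dots> < 1" using G(2) i j ij k by simp
  finally show ?thesis .
qed

end
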